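(* For every integer $R\ge1$, $$\pi-\Vert T_R\Vert=\inf_{\phi\in E(R)}\int_0^{2\pi}x\,|\phi(x)|^2\,dx,$$ where $E(R)$ is the set of functions $\phi(x)=\frac{1}{\sqrt{2\pi}}\sum_{n=1}^R u_ne^{i(n-1)x}$ with $\mathbf{u}\in\mathbb{C}^R$, $\sum_{n=1}^R|u_n|^2=1$.
   Context: $T_R$ is the $R\times R$ matrix with $(T_R)_{m,n}=0$ if $m=n$ and $(T_R)_{m,n}=\frac{1}{m-n}$ if $m\ne n$, $1\le m,n\le R$. $\Vert\cdot\Vert$ is the operator norm induced by the Euclidean norm. *)

theory Defs
  imports "HOL-Analysis.Analysis"
begin

definition Tmat :: "nat \<Rightarrow> nat \<Rightarrow> real" where
  "Tmat m n = (if m = n then 0 else 1 / (real m - real n))"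

definition vnorm :: "nat \<Rightarrow> (nat \<Rightarrow> complex) \<Rightarrow> real" where
  "vnorm R u = sqrt (\<Sum>n=1..R. (cmod (u n))\<^sup>2)"

definition T_opnorm :: "nat \<Rightarrow> real" where
  "T_opnorm R = Sup {vnorm R (\<lambda>m. \<Sum>n=1..R. complex_of_real (Tmat m n) * u n) | u. vnorm R u = 1}"

definition E :: "nat \<Rightarrow> (real \<Rightarrow> complex) set" where
  "E R = {\<phi>. \<exists>u :: nat \<Rightarrow> complex. (\<Sum>n=1..R. (cmod (u n))\<^sup>2) = 1 \<and>
      \<phi> = (\<lambda>x. complex_of_real (1 / sqrt (2 * pi)) *
               (\<Sum>n=1..R. u n * exp (\<i> * complex_of_real (real (n - 1) * x))))}"

end

theory Submission
  imports Defs
begin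

text \<open>
  Expanding the square, the integral of x |phi(x)|^2 for phi with coefficient vector u equals
  pi - Im <u, T u>, since the moments of x exp(ikx) over [0, 2 pi] are 2 pi^2 for k = 0 and
  -2 pi i / k otherwise. It remains to see that the supremum of Im <u, T u> over unit vectors
  is ||T||. One inequality is Cauchy-Schwarz. For the other, T is real and skew-symmetric, so
  Im <x, T y> is recovered by polarization from the values of Im <v, T v>, and the latter
  changes sign under complex conjugation of v; testing with y = -i T u / ||T u|| gives
  ||T u|| <= sup Im <v, T v>.
\<close>

section \<open>Real skew-symmetric matrices acting on complex vectors\<close>

definition cmat_vec :: "(nat \<Rightarrow> nat \<Rightarrow> real) \<Rightarrow> nat \<Rightarrow> (nat \<Rightarrow> complex) \<Rightarrow> nat \<Rightarrow> complex" where
  "cmat_vec A R u m = (\<Sum>n=1..R. complex_of_real (A m n) * u n)"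

definition cmat_form ::
    "(nat \<Rightarrow> nat \<Rightarrow> real) \<Rightarrow> nat \<Rightarrow> (nat \<Rightarrow> complex) \<Rightarrow> (nat \<Rightarrow> complex) \<Rightarrow> complex" where
  "cmat_form A R x y = (\<Sum>m=1..R. cnj (x m) * cmat_vec A R y m)"

definition imag_quad :: "(nat \<Rightarrow> nat \<Rightarrow> real) \<Rightarrow> nat \<Rightarrow> (nat \<Rightarrow> complex) \<Rightarrow> real" where
  "imag_quad A R u = Im (cmat_form A R u u)"

definition sqnorm :: "nat \<Rightarrow> (nat \<Rightarrow> complex) \<Rightarrow> real" where
  "sqnorm R u = (\<Sum>m=1..R. (cmod (u m))\<^sup>2)"

lemma cmat_form_double_sum:
  "cmat_form A R x y = (\<Sum>m=1..R. \<Sum>n=1..R. cnj (x m) * complex_of_real (A m n) * y n)"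
  by (simp add: cmat_form_def cmat_vec_def sum_distrib_left mult.assoc)

lemma cmat_form_swap:
  assumes skew: "\<And>m n. A n m = - A m n"
  shows "cmat_form A R y x = - cnj (cmat_form A R x y)"
proof -
  have "cnj (cmat_form A R x y) = (\<Sum>m=1..R. \<Sum>n=1..R. x m * complex_of_real (A m n) * cnj (y n))"
    by (simp add: cmat_form_double_sum cnj_sum)
  also have "\<dots> = (\<Sum>n=1..R. \<Sum>m=1..R. x m * complex_of_real (A m n) * cnj (y n))"
    by (rule sum.swap)
  also have "\<dots> = (\<Sum>n=1..R. \<Sum>m=1..R. - (cnj (y n) * complex_of_real (A n m) * x m))"
  proof (intro sum.cong refl)
    fix n m
    show "x m * complex_of_real (A m n) * cnj (y n) = - (cnj (y n) * complex_of_real (A n m) * x m)"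
      by (simp add: skew[of m n])
  qed
  finally show ?thesis
    by (simp add: cmat_form_double_sum sum_negf)
qed

lemma cmat_form_add_diff:
  "cmat_form A R (\<lambda>m. x m + y m) (\<lambda>m. x m + y m)
     = cmat_form A R x x + cmat_form A R x y + cmat_form A R y x + cmat_form A R y y"
  "cmat_form A R (\<lambda>m. x m - y m) (\<lambda>m. x m - y m)
     = cmat_form A R x x - cmat_form A R x y - cmat_form A R y x + cmat_form A R y y"
  by (simp_all add: cmat_form_double_sum algebra_simps sum.distrib sum_subtractf)

lemma imag_quad_polarization:
  assumes skew: "\<And>m n. A n m = - A m n"
  shows "4 * Im (cmat_form A R x y) = imag_quad A R (\<lambda>m. x m + y m) - imag_quad A R (\<lambda>m. x m - y m)"
  using cmat_form_swap[of A R y x, OF skew] by (simp add: imag_quad_def cmat_form_add_diff)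

lemma imag_quad_cnj: "imag_quad A R (\<lambda>m. cnj (x m)) = - imag_quad A R x"
proof -
  have "cmat_form A R (\<lambda>m. cnj (x m)) (\<lambda>m. cnj (x m)) = cnj (cmat_form A R x x)"
    by (simp add: cmat_form_def cmat_vec_def cnj_sum)
  then show ?thesis by (simp add: imag_quad_def)
qed

lemma imag_quad_scaleR: "imag_quad A R (\<lambda>m. complex_of_real r * x m) = r^2 * imag_quad A R x"
proof -
  have "cmat_form A R (\<lambda>m. complex_of_real r * x m) (\<lambda>m. complex_of_real r * x m)
      = complex_of_real (r^2) * cmat_form A R x x"
    by (simp add: cmat_form_double_sum sum_distrib_left power2_eq_square mult_ac)
  then show ?thesis by (simp add: imag_quad_def)
qed

lemma sqnorm_nonneg: "sqnorm R x \<ge> 0"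
  by (simp add: sqnorm_def sum_nonneg)

lemma sqnorm_scale: "sqnorm R (\<lambda>m. c * x m) = (cmod c)^2 * sqnorm R x"
  by (simp add: sqnorm_def sum_distrib_left norm_mult power_mult_distrib)

lemma sqnorm_cnj: "sqnorm R (\<lambda>m. cnj (x m)) = sqnorm R x"
  by (simp add: sqnorm_def)

lemma sqnorm_parallelogram:
  "sqnorm R (\<lambda>m. x m + y m) + sqnorm R (\<lambda>m. x m - y m) = 2 * sqnorm R x + 2 * sqnorm R y"
proof -
  have "(cmod (a + b))^2 + (cmod (a - b))^2 = 2 * (cmod a)^2 + 2 * (cmod b)^2" for a b :: complex
  proof -
    have sq: "(cmod z)^2 = Re z * Re z + Im z * Im z" for z
      using cmod_power2[of z] by (simp add: power2_eq_square)
    show ?thesis unfolding sq by (simp add: algebra_simps)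
  qed
  then show ?thesis by (simp add: sqnorm_def sum.distrib[symmetric] sum_distrib_left)
qed

lemma complex_of_sqnorm: "complex_of_real (sqnorm R x) = (\<Sum>m=1..R. cnj (x m) * x m)"
  by (simp add: sqnorm_def complex_norm_square mult.commute del: of_real_power)

lemma imag_quad_le_sqnorm:
  assumes bound: "\<And>v. sqnorm R v = 1 \<Longrightarrow> imag_quad A R v \<le> S"
  shows "imag_quad A R z \<le> S * sqnorm R z"
proof (cases "sqnorm R z = 0")
  case True
  then have "\<forall>m\<in>{1..R}. z m = 0"
    unfolding sqnorm_def by (subst (asm) sum_nonneg_eq_0_iff) auto
  then show ?thesis using True by (simp add: imag_quad_def cmat_form_def)
next
  case False
  then have pos: "sqnorm R z > 0" using sqnorm_nonneg[of R z] by simp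
  define r where "r = 1 / sqrt (sqnorm R z)"
  have r2: "r^2 * sqnorm R z = 1" using pos by (simp add: r_def power_divide)
  then have "sqnorm R (\<lambda>m. complex_of_real r * z m) = 1" by (simp add: sqnorm_scale)
  then have "r^2 * imag_quad A R z \<le> S" using bound imag_quad_scaleR by metis
  have "imag_quad A R z = (r^2 * sqnorm R z) * imag_quad A R z" using r2 by simp
  also have "\<dots> = (r^2 * imag_quad A R z) * sqnorm R z" by (simp only: mult_ac)
  also have "\<dots> \<le> S * sqnorm R z"
    using \<open>r^2 * imag_quad A R z \<le> S\<close> pos by (simp add: mult_right_mono)
  finally show ?thesis .
qed

lemma norm_cmat_vec_le_imag_quad_bound:
  assumes skew: "\<And>m n. A n m = - A m n"
    and bound: "\<And>v. sqnorm R v = 1 \<Longrightarrow> imag_quad A R v \<le> S"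
    and u: "sqnorm R u = 1"
  shows "sqrt (sqnorm R (cmat_vec A R u)) \<le> S"
proof -
  have up: "imag_quad A R z \<le> S * sqnorm R z" for z
    using imag_quad_le_sqnorm[OF bound] .
  have lo: "- imag_quad A R z \<le> S * sqnorm R z" for z
    using up[of "\<lambda>m. cnj (z m)"] by (simp add: imag_quad_cnj sqnorm_cnj)
  define t where "t = sqrt (sqnorm R (cmat_vec A R u))"
  show ?thesis
  proof (cases "t = 0")
    case True
    have "S \<ge> 0" using up[of u] lo[of u] u by simp
    then show ?thesis using True by (simp add: t_def)
  next
    case False
    have tt: "t^2 = sqnorm R (cmat_vec A R u)"
      using sqnorm_nonneg[of R "cmat_vec A R u"] by (simp add: t_def)
    have tpos: "t > 0" using False sqnorm_nonneg[of R "cmat_vec A R u"] by (simp add: t_def)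
    define y where "y = (\<lambda>m. - \<i> * complex_of_real (1/t) * cmat_vec A R u m)"
    have "sqnorm R y = (cmod (- \<i> * complex_of_real (1/t)))^2 * sqnorm R (cmat_vec A R u)"
      unfolding y_def by (subst sqnorm_scale[symmetric]) (simp add: mult.assoc)
    then have unit_y: "sqnorm R y = 1"
      using tpos tt[symmetric] by (simp add: norm_mult norm_divide power_divide)
    have "cmat_form A R y u = \<i> * complex_of_real (1/t) * (\<Sum>m=1..R. cnj (cmat_vec A R u m) * cmat_vec A R u m)"
      by (simp add: cmat_form_def y_def sum_distrib_left mult_ac)
    also have "\<dots> = \<i> * complex_of_real (1/t) * complex_of_real (t^2)"
      by (simp only: tt complex_of_sqnorm)
    finally have "Im (cmat_form A R y u) = t"
      using tpos by (simp add: power2_eq_square)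
    then have "4 * t = imag_quad A R (\<lambda>m. y m + u m) - imag_quad A R (\<lambda>m. y m - u m)"
      using imag_quad_polarization[of A R y u, OF skew] by simp
    also have "\<dots> \<le> S * (sqnorm R (\<lambda>m. y m + u m) + sqnorm R (\<lambda>m. y m - u m))"
      using up[of "\<lambda>m. y m + u m"] lo[of "\<lambda>m. y m - u m"] by (simp add: algebra_simps)
    also have "\<dots> = 4 * S"
      using sqnorm_parallelogram[of R y u] unit_y u by simp
    finally show ?thesis by (simp add: t_def)
  qed
qed

lemma imag_quad_le_norm_cmat_vec:
  assumes "sqnorm R u = 1"
  shows "imag_quad A R u \<le> sqrt (sqnorm R (cmat_vec A R u))"
proof -
  have "imag_quad A R u \<le> cmod (cmat_form A R u u)"
    unfolding imag_quad_def using abs_Im_le_cmod abs_ge_self order_trans by blast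
  also have "\<dots> \<le> (\<Sum>m=1..R. cmod (u m) * cmod (cmat_vec A R u m))"
    unfolding cmat_form_def by (rule order_trans[OF norm_sum]) (simp add: norm_mult)
  also have "\<dots> \<le> sqrt (sqnorm R (cmat_vec A R u))"
  proof (rule real_le_rsqrt)
    show "(\<Sum>m=1..R. cmod (u m) * cmod (cmat_vec A R u m))^2 \<le> sqnorm R (cmat_vec A R u)"
      using Cauchy_Schwarz_ineq_sum[of "\<lambda>m. cmod (u m)" "\<lambda>m. cmod (cmat_vec A R u m)" "{1..R}"]
        assms by (simp add: sqnorm_def)
  qed
  finally show ?thesis .
qed

lemma imag_quad_le_sum_abs:
  assumes "sqnorm R u = 1"
  shows "imag_quad A R u \<le> (\<Sum>m=1..R. \<Sum>n=1..R. \<bar>A m n\<bar>)"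
proof -
  have le1: "cmod (u m) \<le> 1" if "m \<in> {1..R}" for m
  proof -
    have "(cmod (u m))^2 \<le> sqnorm R u"
      unfolding sqnorm_def by (rule member_le_sum) (use that in auto)
    then show ?thesis using assms by (simp add: abs_square_le_1)
  qed
  have "imag_quad A R u \<le> cmod (cmat_form A R u u)"
    unfolding imag_quad_def using abs_Im_le_cmod abs_ge_self order_trans by blast
  also have "\<dots> \<le> (\<Sum>m=1..R. \<Sum>n=1..R. cmod (cnj (u m) * complex_of_real (A m n) * u n))"
    unfolding cmat_form_double_sum by (rule order_trans[OF norm_sum sum_mono[OF norm_sum]])
  also have "\<dots> \<le> (\<Sum>m=1..R. \<Sum>n=1..R. \<bar>A m n\<bar>)"
  proof (intro sum_mono)
    fix m n assume "m \<in> {1..R}" "n \<in> {1..R}"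
    with le1 have "cmod (u m) * cmod (u n) \<le> 1" by (simp add: mult_le_one)
    then have "\<bar>A m n\<bar> * (cmod (u m) * cmod (u n)) \<le> \<bar>A m n\<bar>"
      by (simp add: mult_left_le)
    then show "cmod (cnj (u m) * complex_of_real (A m n) * u n) \<le> \<bar>A m n\<bar>"
      by (simp add: norm_mult mult_ac)
  qed
  finally show ?thesis .
qed

lemma unit_sphere_nonempty:
  assumes "R \<ge> 1"
  shows "{u. sqnorm R u = 1} \<noteq> {}"
proof -
  have "sqnorm R (\<lambda>m. if m = 1 then 1 else 0) = (\<Sum>m=1..R. if m = 1 then 1 else 0)"
    unfolding sqnorm_def by (rule sum.cong) auto
  also have "\<dots> = 1" using assms by simp
  finally show ?thesis by blast
qed

lemma bdd_above_imag_quad: "bdd_above (imag_quad A R ` {u. sqnorm R u = 1})"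
  using imag_quad_le_sum_abs by (intro bdd_aboveI2) blast

lemma Sup_imag_quad_eq_Sup_norm_cmat_vec:
  assumes skew: "\<And>m n. A n m = - A m n" and "R \<ge> 1"
  shows "Sup (imag_quad A R ` {u. sqnorm R u = 1})
       = Sup ((\<lambda>u. sqrt (sqnorm R (cmat_vec A R u))) ` {u. sqnorm R u = 1})"
    (is "Sup (?q ` ?U) = Sup (?n ` ?U)")
proof -
  have nonempty: "?U \<noteq> {}" using unit_sphere_nonempty[OF \<open>R \<ge> 1\<close>] .
  have "?q v \<le> Sup (?q ` ?U)" if "v \<in> ?U" for v
    by (rule cSUP_upper[OF that bdd_above_imag_quad])
  then have n_le: "?n u \<le> Sup (?q ` ?U)" if "u \<in> ?U" for u
    using that norm_cmat_vec_le_imag_quad_bound[OF skew] by simp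
  have "Sup (?q ` ?U) \<le> Sup (?n ` ?U)"
  proof (rule cSUP_mono[OF nonempty bdd_aboveI2[OF n_le]])
    show "\<exists>v\<in>?U. ?q u \<le> ?n v" if "u \<in> ?U" for u
      using that imag_quad_le_norm_cmat_vec by blast
  qed
  moreover have "Sup (?n ` ?U) \<le> Sup (?q ` ?U)"
    by (rule cSUP_least[OF nonempty n_le])
  ultimately show ?thesis by (rule antisym)
qed

section \<open>First moments of trigonometric polynomials\<close>

lemma has_integral_x_exp_int:
  fixes d :: real
  assumes "d \<in> \<int>"
  shows "((\<lambda>x. complex_of_real x * exp (\<i> * complex_of_real (d * x))) has_integral
     (if d = 0 then complex_of_real (2 * pi^2) else - 2 * pi * \<i> / complex_of_real d)) {0..2*pi}"
proof (cases "d = 0")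
  case True
  have "((\<lambda>z. z^2/2) has_field_derivative z) (at z)" for z :: complex
    by (auto intro!: derivative_eq_intros)
  then have "((\<lambda>x. complex_of_real x) has_integral
      (complex_of_real (2*pi))^2/2 - (complex_of_real 0)^2/2) {0..2*pi}"
    by (intro fundamental_theorem_of_calculus has_vector_derivative_real_field) auto
  then show ?thesis using True by (simp add: power2_eq_square)
next
  case False
  define D where "D = complex_of_real d"
  have D0: "D \<noteq> 0" using False by (simp add: D_def)
  define g where "g = (\<lambda>z. z * exp (\<i>*D*z) / (\<i>*D) + exp (\<i>*D*z) / D^2)"
  have "(g has_field_derivative z * exp (\<i>*D*z)) (at z)" for z
    unfolding g_def using D0
    by (auto intro!: derivative_eq_intros simp: field_simps power2_eq_square)
  then have "((\<lambda>x. complex_of_real x * exp (\<i>*D*complex_of_real x)) has_integral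
      (g (complex_of_real (2*pi)) - g (complex_of_real 0))) {0..2*pi}"
    by (intro fundamental_theorem_of_calculus has_vector_derivative_real_field) auto
  moreover have period: "exp (\<i>*D*complex_of_real (2*pi)) = 1"
  proof -
    obtain k where "d = of_int k" using assms Ints_cases by blast
    then have "\<i>*D*complex_of_real (2*pi) = complex_of_real (2 * real_of_int k * pi) * \<i>"
      by (simp add: D_def)
    then show ?thesis using exp_integer_2pi[of "real_of_int k"] by (simp add: mult_ac)
  qed
  moreover have "g (complex_of_real (2*pi)) - g (complex_of_real 0) = - 2 * pi * \<i> / D"
    using period D0 by (simp add: g_def field_simps)
  ultimately show ?thesis using False by (simp add: D_def mult.assoc)
qed

definition trig_poly :: "nat \<Rightarrow> (nat \<Rightarrow> complex) \<Rightarrow> real \<Rightarrow> complex" where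
  "trig_poly R u x = complex_of_real (1 / sqrt (2 * pi)) *
     (\<Sum>n=1..R. u n * exp (\<i> * complex_of_real (real (n - 1) * x)))"

lemma has_integral_x_mode_product:
  "((\<lambda>x. complex_of_real x * exp (\<i> * complex_of_real ((real m - real n) * x)) / complex_of_real (2 * pi))
     has_integral (of_bool (m = n) * complex_of_real pi - \<i> * complex_of_real (Tmat m n))) {0..2*pi}"
proof -
  have "real m - real n \<in> \<int>" by simp
  note has_integral_divide[OF has_integral_x_exp_int[OF this], of "complex_of_real (2 * pi)"]
  moreover have "(if real m - real n = 0 then complex_of_real (2 * pi^2)
      else - 2 * pi * \<i> / complex_of_real (real m - real n)) / complex_of_real (2 * pi)
      = of_bool (m = n) * complex_of_real pi - \<i> * complex_of_real (Tmat m n)"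
  proof (cases "m = n")
    case False
    then have "complex_of_real (real m - real n) \<noteq> 0" by simp
    with False show ?thesis by (simp add: Tmat_def field_simps)
  qed (simp add: Tmat_def power2_eq_square)
  ultimately show ?thesis by simp
qed

lemma exp_mode_mult_cnj:
  assumes "m \<ge> 1" "n \<ge> 1"
  shows "exp (\<i> * complex_of_real (real (m - 1) * x)) * cnj (exp (\<i> * complex_of_real (real (n - 1) * x)))
     = exp (\<i> * complex_of_real ((real m - real n) * x))"
proof -
  have "\<i> * complex_of_real (real (m - 1) * x) + - \<i> * complex_of_real (real (n - 1) * x)
      = \<i> * complex_of_real ((real m - real n) * x)"
    using assms by (simp add: of_nat_diff algebra_simps)
  then show ?thesis by (simp add: exp_cnj exp_add[symmetric])
qed

lemma x_cmod_trig_poly_expand: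
  "complex_of_real (x * (cmod (trig_poly R u x))\<^sup>2)
     = (\<Sum>m=1..R. \<Sum>n=1..R. u m * cnj (u n) *
          (complex_of_real x * exp (\<i> * complex_of_real ((real m - real n) * x)) / complex_of_real (2 * pi)))"
proof -
  let ?e = "\<lambda>n. exp (\<i> * complex_of_real (real (n - 1) * x))"
  let ?s = "\<Sum>n=1..R. u n * ?e n"
  have "(cmod (trig_poly R u x))\<^sup>2 = (cmod ?s)\<^sup>2 / (2 * pi)"
    by (simp add: trig_poly_def norm_divide power_divide)
  then have "complex_of_real ((cmod (trig_poly R u x))\<^sup>2) = ?s * cnj ?s / complex_of_real (2 * pi)"
    by (simp add: complex_norm_square del: of_real_power)
  also have "?s * cnj ?s = (\<Sum>m=1..R. \<Sum>n=1..R. u m * cnj (u n) * (?e m * cnj (?e n)))"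
    by (simp add: cnj_sum sum_product mult_ac)
  also have "\<dots> = (\<Sum>m=1..R. \<Sum>n=1..R. u m * cnj (u n) * exp (\<i> * complex_of_real ((real m - real n) * x)))"
  proof (intro sum.cong refl)
    fix m n assume "m \<in> {1..R}" "n \<in> {1..R}"
    then show "u m * cnj (u n) * (?e m * cnj (?e n))
        = u m * cnj (u n) * exp (\<i> * complex_of_real ((real m - real n) * x))"
      by (simp only: exp_mode_mult_cnj atLeastAtMost_iff)
  qed
  finally show ?thesis
    by (simp add: sum_divide_distrib sum_distrib_left mult_ac)
qed

lemma integral_x_cmod_trig_poly:
  "integral {0..2*pi} (\<lambda>x. x * (cmod (trig_poly R u x))\<^sup>2) = pi * sqnorm R u - imag_quad Tmat R u"
proof -
  have "((\<lambda>x. complex_of_real (x * (cmod (trig_poly R u x))\<^sup>2)) has_integral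
      (\<Sum>m=1..R. \<Sum>n=1..R. u m * cnj (u n) * (of_bool (m = n) * complex_of_real pi - \<i> * complex_of_real (Tmat m n))))
      {0..2*pi}"
    unfolding x_cmod_trig_poly_expand
    by (intro has_integral_sum finite_atLeastAtMost has_integral_mult_right has_integral_x_mode_product)
  also have "(\<Sum>m=1..R. \<Sum>n=1..R. u m * cnj (u n) * (of_bool (m = n) * complex_of_real pi - \<i> * complex_of_real (Tmat m n)))
      = complex_of_real pi * (\<Sum>m=1..R. \<Sum>n=1..R. u m * cnj (u n) * of_bool (m = n))
        - \<i> * (\<Sum>m=1..R. \<Sum>n=1..R. u m * complex_of_real (Tmat m n) * cnj (u n))"
    by (simp add: algebra_simps sum_subtractf sum_distrib_left)
  also have "(\<Sum>m=1..R. \<Sum>n=1..R. u m * cnj (u n) * of_bool (m = n)) = complex_of_real (sqnorm R u)"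
    by (simp add: complex_of_sqnorm mult.commute of_bool_def if_distrib[of "\<lambda>z. _ * z"] cong: if_cong)
  also have "(\<Sum>m=1..R. \<Sum>n=1..R. u m * complex_of_real (Tmat m n) * cnj (u n)) = cnj (cmat_form Tmat R u u)"
    by (simp add: cmat_form_double_sum cnj_sum)
  finally have "((\<lambda>x. complex_of_real (x * (cmod (trig_poly R u x))\<^sup>2)) has_integral
      complex_of_real pi * complex_of_real (sqnorm R u) - \<i> * cnj (cmat_form Tmat R u u)) {0..2*pi}" .
  from has_integral_Re[OF this] show ?thesis
    by (simp add: imag_quad_def integral_unique)
qed

section \<open>The operator norm of T_R\<close>

lemma Inf_const_minus:
  fixes S :: "real set"
  assumes "S \<noteq> {}" "bdd_above S"
  shows "Inf ((\<lambda>t. c - t) ` S) = c - Sup S"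
proof (rule cInf_eq_non_empty)
  show "(\<lambda>t. c - t) ` S \<noteq> {}" using assms(1) by blast
  show "c - Sup S \<le> x" if "x \<in> (\<lambda>t. c - t) ` S" for x
    using that cSup_upper[OF _ assms(2)] by auto
  show "y \<le> c - Sup S" if "\<And>x. x \<in> (\<lambda>t. c - t) ` S \<Longrightarrow> y \<le> x" for y
  proof -
    have "Sup S \<le> c - y" using that by (intro cSup_least[OF assms(1)]) force
    then show ?thesis by simp
  qed
qed

lemma Tmat_skew: "Tmat n m = - Tmat m n"
  by (simp add: Tmat_def divide_simps)

lemma T_opnorm_eq_Sup: "T_opnorm R = Sup ((\<lambda>u. sqrt (sqnorm R (cmat_vec Tmat R u))) ` {u. sqnorm R u = 1})"
proof -
  have "(\<lambda>m. \<Sum>n=1..R. complex_of_real (Tmat m n) * u n) = cmat_vec Tmat R u" for u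
    by (simp add: cmat_vec_def fun_eq_iff)
  then show ?thesis
    unfolding T_opnorm_def vnorm_def sqnorm_def[symmetric] by (auto intro!: arg_cong[where f=Sup])
qed

lemma E_eq_image_trig_poly: "E R = trig_poly R ` {u. sqnorm R u = 1}"
  unfolding E_def sqnorm_def trig_poly_def[abs_def] by auto

theorem mainTheorem15:
  fixes R :: nat
  assumes "R \<ge> 1"
  shows "pi - T_opnorm R =
    Inf ((\<lambda>\<phi>. integral {0..2*pi} (\<lambda>x. x * (cmod (\<phi> x))\<^sup>2)) ` E R)"
proof -
  let ?U = "{u. sqnorm R u = 1}"
  have "T_opnorm R = Sup (imag_quad Tmat R ` ?U)"
    unfolding T_opnorm_eq_Sup using Sup_imag_quad_eq_Sup_norm_cmat_vec[OF Tmat_skew assms] by simp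
  moreover have "(\<lambda>\<phi>. integral {0..2*pi} (\<lambda>x. x * (cmod (\<phi> x))\<^sup>2)) ` E R
      = (\<lambda>t. pi - t) ` imag_quad Tmat R ` ?U"
    unfolding E_eq_image_trig_poly image_image by (auto simp: integral_x_cmod_trig_poly)
  ultimately show ?thesis
    using Inf_const_minus[OF _ bdd_above_imag_quad] unit_sphere_nonempty[OF assms] by simp
qed

end
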